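(* Let $n$ be a positive integer, $k$ an integer with $0\le k\le n$, and $0<\phi<\infty$. For integers $0\le \ell\le n$ and real $s$ define $$Q_\ell(s) = \frac{S(n-\ell,k,\phi e^{-s})}{S(n,k,\phi e^{-s})}.$$ Then for all real $s$, $$\frac{dQ_\ell}{ds}(s) = \phi e^{-s}\big[n\,Q_\ell(s)Q_1(s) - (n-\ell)\,Q_{\ell+1}(s)\big].$$
   Context: $S(j,k)$ denotes the (central) Stirling numbers of the second kind. The noncentral Stirling numbers of the second kind are defined, for integers $n\ge 0$, $k\ge 0$ and real $\phi$, by $S(n,k,\phi) = \sum_{r=0}^{n-k}\binom{n}{k+r}\phi^{n-k-r}S(k+r,k)$, with the convention $S(n',k,\phi)=0$ whenever $n'<k$ (including negative $n'$). For $\phi>0$ and $0\le k\le n$, $S(n,k,\phi)>0$. *)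

theory Defs
  imports Complex_Main "HOL-Combinatorics.Stirling"
begin

text \<open>Noncentral Stirling numbers of the second kind S(n,k,phi); the first argument is an
  integer so that S(n',k,phi) = 0 for n' < k (including negative n').\<close>
definition nc_Stirling :: "int \<Rightarrow> nat \<Rightarrow> real \<Rightarrow> real" where
  "nc_Stirling n k \<phi> =
     (if n < int k then 0
      else (\<Sum>r = 0..nat n - k. real (nat n choose (k + r)) * \<phi> ^ (nat n - k - r)
                                  * real (Stirling (k + r) k)))"

end

theory Submission
  imports Defs
begin

text \<open>For \<open>m \<ge> 0\<close> the definition is the binomial-type polynomial
  \<open>S(m,k,x) = \<Sum>\<^sub>j C(m,j) x\<^sup>m\<^sup>-\<^sup>j S(j,k)\<close>, so by binomial absorption
  \<open>d/dx S(m,k,x) = m S(m-1,k,x)\<close>, and its term \<open>j = k\<close> makes it positive for \<open>x > 0\<close>.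
  Substituting \<open>x = \<phi> e\<^sup>-\<^sup>s\<close>, whose \<open>s\<close>-derivative is \<open>-x\<close>, the quotient rule
  applied to \<open>Q\<^sub>l\<close> yields the identity; since the first argument is an integer,
  \<open>S(n-l-1,k,x)\<close> is simply the numerator of \<open>Q\<^sub>l\<^sub>+\<^sub>1\<close>, even for \<open>l = n\<close>.\<close>

lemma nc_Stirling_of_nat:
  "nc_Stirling (int m) k x = (\<Sum>j\<le>m. real (m choose j) * x ^ (m - j) * real (Stirling j k))"
proof (cases "k \<le> m")
  case True
  let ?f = "\<lambda>j. real (m choose j) * x ^ (m - j) * real (Stirling j k)"
  have "(\<Sum>j\<le>m. ?f j) = (\<Sum>j\<in>{..<k} \<union> {k..m}. ?f j)"
    using True by (intro sum.cong) auto
  also have "\<dots> = (\<Sum>j=k..m. ?f j)"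
    by (subst sum.union_disjoint) auto
  also have "\<dots> = (\<Sum>r=0..m-k. ?f (k + r))"
    using True by (intro sum.reindex_bij_witness[of _ "\<lambda>r. k + r" "\<lambda>j. j - k"]) auto
  finally show ?thesis
    using True by (simp add: nc_Stirling_def)
qed (simp add: nc_Stirling_def)

lemma nc_Stirling_pos:
  assumes "k \<le> m" and "x > 0"
  shows "nc_Stirling (int m) k x > 0"
proof -
  have "0 < real (m choose k) * x ^ (m - k) * real (Stirling k k)"
    using assms by simp
  also have "\<dots> \<le> nc_Stirling (int m) k x"
    unfolding nc_Stirling_of_nat using assms by (intro member_le_sum) auto
  finally show ?thesis .
qed

lemma has_real_derivative_nc_Stirling_of_nat:
  "(nc_Stirling (int m) k has_real_derivative real m * nc_Stirling (int m - 1) k x) (at x)"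
proof (cases m)
  case 0
  have "nc_Stirling 0 k = (\<lambda>_. real (Stirling 0 k))"
    using nc_Stirling_of_nat[of 0 k] by (simp add: fun_eq_iff)
  with 0 show ?thesis
    by simp
next
  case (Suc p)
  let ?t = "\<lambda>j. real (p choose j) * x ^ (p - j) * real (Stirling j k)"
  have "(nc_Stirling (int m) k has_real_derivative
      (\<Sum>j\<le>m. real (m choose j) * (real (m - j) * x ^ (m - j - 1)) * real (Stirling j k))) (at x)"
    unfolding nc_Stirling_of_nat[abs_def]
    by (auto intro!: derivative_eq_intros sum.cong simp: mult_ac)
  also have "(\<Sum>j\<le>m. real (m choose j) * (real (m - j) * x ^ (m - j - 1)) * real (Stirling j k))
      = (\<Sum>j\<le>p. real (m choose j) * (real (m - j) * x ^ (m - j - 1)) * real (Stirling j k))"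
    unfolding Suc sum.atMost_Suc by simp
  also have "\<dots> = (\<Sum>j\<le>p. real m * ?t j)"
  proof (rule sum.cong[OF refl])
    fix j
    assume "j \<in> {..p}"
    have "real (m choose j) * real (m - j) = real m * real (p choose j)"
      using binomial_absorb_comp[of m j] Suc by (metis diff_Suc_1 mult.commute of_nat_mult)
    moreover have "m - j - 1 = p - j"
      using Suc by simp
    ultimately show "real (m choose j) * (real (m - j) * x ^ (m - j - 1)) * real (Stirling j k)
        = real m * ?t j"
      by (metis mult.assoc)
  qed
  also have "\<dots> = real m * nc_Stirling (int m - 1) k x"
    using Suc by (simp add: nc_Stirling_of_nat sum_distrib_left)
  finally show ?thesis .
qed

lemma has_real_derivative_nc_Stirling:
  "(nc_Stirling m k has_real_derivative of_int m * nc_Stirling (m - 1) k x) (at x)"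
proof (cases "m < 0")
  case True
  then have "nc_Stirling m k = (\<lambda>_. 0)" and "nc_Stirling (m - 1) k x = 0"
    by (auto simp: nc_Stirling_def fun_eq_iff)
  then show ?thesis
    by simp
next
  case False
  then show ?thesis
    using has_real_derivative_nc_Stirling_of_nat[of "nat m" k x] by simp
qed

lemma has_real_derivative_nc_Stirling_exp:
  "((\<lambda>t. nc_Stirling m k (\<phi> * exp (- t))) has_real_derivative
      - \<phi> * exp (- s) * of_int m * nc_Stirling (m - 1) k (\<phi> * exp (- s))) (at s)"
  by (rule DERIV_chain2[OF has_real_derivative_nc_Stirling, THEN DERIV_cong])
     (auto intro!: derivative_eq_intros)

theorem lemma1:
  fixes n k l :: nat and \<phi> s :: real
    and Q :: "nat \<Rightarrow> real \<Rightarrow> real"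
  assumes "n > 0" and "k \<le> n" and "\<phi> > 0" and "l \<le> n"
    and "Q = (\<lambda>j t. nc_Stirling (int n - int j) k (\<phi> * exp (- t))
                      / nc_Stirling (int n) k (\<phi> * exp (- t)))"
  shows "(Q l has_real_derivative
           \<phi> * exp (- s) * (real n * Q l s * Q 1 s - real (n - l) * Q (l + 1) s)) (at s)"
proof -
  define N where "N m = nc_Stirling m k (\<phi> * exp (- s))" for m
  have "N (int n) > 0"
    unfolding N_def using assms(2,3) by (intro nc_Stirling_pos) auto
  have Q_at_s: "Q j s = N (int n - int j) / N (int n)" for j
    by (simp add: assms(5) N_def)
  have "(Q l has_real_derivative
      ((- \<phi> * exp (- s) * of_int (int n - int l) * N (int n - int l - 1)) * N (int n)
        - N (int n - int l) * (- \<phi> * exp (- s) * of_int (int n) * N (int n - 1)))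
      / (N (int n) * N (int n))) (at s)"
    unfolding assms(5) N_def
    by (intro DERIV_divide has_real_derivative_nc_Stirling_exp)
       (use \<open>N (int n) > 0\<close> in \<open>simp add: N_def\<close>)
  also have "(- \<phi> * exp (- s) * of_int (int n - int l) * N (int n - int l - 1) * N (int n)
        - N (int n - int l) * (- \<phi> * exp (- s) * of_int (int n) * N (int n - 1)))
        / (N (int n) * N (int n))
      = \<phi> * exp (- s) * (real n * Q l s * Q 1 s - real (n - l) * Q (l + 1) s)"
    unfolding Q_at_s using \<open>N (int n) > 0\<close> assms(4)
    by (simp add: of_nat_diff field_simps diff_diff_eq)
  finally show ?thesis .
qed

end
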